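(* Let $H$ be a separable complex Hilbert space, $(\Omega,\mu)$ a measure space with positive measure, and let $K\in B(H)$ have closed range. Let $F:\Omega\to H$ be a Parseval continuous $K$-frame of $H$. Then $K^{\dagger}F$ is the canonical dual continuous $K$-Bessel sequence of $F$; that is, $K^{\dagger}F$ is a dual continuous $K$-Bessel sequence of $F$ and $\|T_{K^{\dagger}F}\|\le\|T_G\|$ for every dual continuous $K$-Bessel sequence $G$ of $F$, where $T_{K^\dagger F}$ and $T_G$ denote the analysis operators of $K^{\dagger}F$ and $G$.
   Context: A map $F:\Omega\to H$ is weakly measurable if $\omega\mapsto\langle f,F(\omega)\rangle$ is measurable for every $f\in H$. A continuous Bessel sequence is a weakly measurable $G$ with $\int_\Omega|\langle f,G(\omega)\rangle|^2\,d\mu(\omega)\le B\|f\|^2$ for all $f\in H$, for some $B>0$; its analysis operator is $T_G:H\to L^2(\Omega,\mu)$, $T_Gf=\{\langle f,G(\omega)\rangle\}_{\omega}$. A Parseval continuous $K$-frame is a weakly measurable $F$ with $\int_\Omega|\langle f,F(\omega)\rangle|^2\,d\mu(\omega)=\|K^{\ast}f\|^2$ for all $f\in H$. A dual continuous $K$-Bessel sequence of $F$ is a continuous Bessel sequence $G$ with $Kf=\int_\Omega\langle f,G(\omega)\rangle F(\omega)\,d\mu(\omega)$ for all $f\in H$. $K^{\dagger}$ denotes the Moore–Penrose pseudo-inverse of the closed-range operator $K$. *)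

theory Defs
  imports "HOL-Analysis.Analysis"
begin

text \<open>The inner product is linear in the FIRST argument and conjugate-linear in the second
  (the convention of the paper: K f = integral of <f,G w> F w).\<close>

class complex_inner = real_normed_vector +
  fixes scaleC :: "complex \<Rightarrow> 'a \<Rightarrow> 'a"
    and cinner :: "'a \<Rightarrow> 'a \<Rightarrow> complex"
  assumes scaleC_add_right: "scaleC a (x + y) = scaleC a x + scaleC a y"
    and scaleC_add_left: "scaleC (a + b) x = scaleC a x + scaleC b x"
    and scaleC_scaleC: "scaleC a (scaleC b x) = scaleC (a * b) x"
    and scaleC_one: "scaleC 1 x = x"
    and scaleR_scaleC: "scaleR r x = scaleC (complex_of_real r) x"
    and cinner_commute: "cinner x y = cnj (cinner y x)"
    and cinner_add_left: "cinner (x + y) z = cinner x z + cinner y z"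
    and cinner_scaleC_left: "cinner (scaleC a x) y = a * cinner x y"
    and cinner_self_nonneg: "Im (cinner x x) = 0 \<and> 0 \<le> Re (cinner x x)"
    and norm_eq_sqrt_cinner: "norm x = sqrt (Re (cinner x x))"

class chilbert_space = complex_inner + complete_space

definition bounded_clinear :: "('a::complex_inner \<Rightarrow> 'b::complex_inner) \<Rightarrow> bool" where
  "bounded_clinear T \<longleftrightarrow> bounded_linear T \<and> (\<forall>c x. T (scaleC c x) = scaleC c (T x))"

definition is_adjoint :: "('a::complex_inner \<Rightarrow> 'b::complex_inner) \<Rightarrow> ('b \<Rightarrow> 'a) \<Rightarrow> bool" where
  "is_adjoint T S \<longleftrightarrow> (\<forall>x y. cinner (T x) y = cinner x (S y))"

definition adj :: "('a::complex_inner \<Rightarrow> 'b::complex_inner) \<Rightarrow> ('b \<Rightarrow> 'a)" where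
  "adj T = (SOME S. is_adjoint T S)"

text \<open>Moore--Penrose pseudo-inverse: the unique bounded operator satisfying the four
  Penrose equations (for closed-range bounded operators it exists and is unique).\<close>
definition pinv :: "('a::complex_inner \<Rightarrow> 'b::complex_inner) \<Rightarrow> ('b \<Rightarrow> 'a)" where
  "pinv T = (THE S. bounded_clinear S \<and> T \<circ> S \<circ> T = T \<and> S \<circ> T \<circ> S = S
                  \<and> is_adjoint (T \<circ> S) (T \<circ> S) \<and> is_adjoint (S \<circ> T) (S \<circ> T))"

definition separable_space :: "'a::metric_space itself \<Rightarrow> bool" where
  "separable_space _ \<longleftrightarrow> (\<exists>D::'a set. countable D \<and> closure D = UNIV)"

definition weakly_measurable :: "'b measure \<Rightarrow> ('b \<Rightarrow> 'a::complex_inner) \<Rightarrow> bool" where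
  "weakly_measurable M F \<longleftrightarrow> (\<forall>f. (\<lambda>\<omega>. cinner f (F \<omega>)) \<in> borel_measurable M)"

definition cont_bessel :: "'b measure \<Rightarrow> ('b \<Rightarrow> 'a::complex_inner) \<Rightarrow> bool" where
  "cont_bessel M G \<longleftrightarrow> weakly_measurable M G \<and>
     (\<exists>B>0. \<forall>f. (\<integral>\<^sup>+\<omega>. ennreal ((cmod (cinner f (G \<omega>)))\<^sup>2) \<partial>M) \<le> ennreal (B * (norm f)\<^sup>2))"

definition parseval_cont_K_frame :: "'b measure \<Rightarrow> ('a::complex_inner \<Rightarrow> 'a) \<Rightarrow> ('b \<Rightarrow> 'a) \<Rightarrow> bool" where
  "parseval_cont_K_frame M K F \<longleftrightarrow> weakly_measurable M F \<and>
     (\<forall>f. (\<integral>\<^sup>+\<omega>. ennreal ((cmod (cinner f (F \<omega>)))\<^sup>2) \<partial>M) = ennreal ((norm (adj K f))\<^sup>2))"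

text \<open>Dual continuous K-Bessel sequence; the H-valued integral is understood in the weak sense:
  <K f, h> = integral of <f, G w> <F w, h>.\<close>
definition dual_cont_K_bessel :: "'b measure \<Rightarrow> ('a::complex_inner \<Rightarrow> 'a) \<Rightarrow> ('b \<Rightarrow> 'a) \<Rightarrow> ('b \<Rightarrow> 'a) \<Rightarrow> bool" where
  "dual_cont_K_bessel M K F G \<longleftrightarrow> cont_bessel M G \<and>
     (\<forall>f h. cinner (K f) h = (\<integral>\<omega>. cinner f (G \<omega>) * cinner (F \<omega>) h \<partial>M))"

text \<open>Operator norm of the analysis operator T_G : H \<rightarrow> L^2(M), T_G f = <f, G(.)>.\<close>
definition analysis_norm :: "'b measure \<Rightarrow> ('b \<Rightarrow> 'a::complex_inner) \<Rightarrow> real" where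
  "analysis_norm M G = (SUP f\<in>{f. norm f \<le> 1}.
      sqrt (enn2real (\<integral>\<^sup>+\<omega>. ennreal ((cmod (cinner f (G \<omega>)))\<^sup>2) \<partial>M)))"

end

theory Submission
  imports Defs
begin

text \<open>Write T for the pseudo-inverse of K. Since K has closed range it is bounded below on
  the orthogonal complement of its kernel (Baire), so T exists and is bounded, and T K is the
  orthogonal projection onto that complement; in particular K* T* = T K. Polarizing the
  Parseval identity gives, for the sequence T F,
  \<integral> \<langle>f, T F\<rangle> \<langle>F, h\<rangle> = \<langle>K* T* f, K* h\<rangle> = \<langle>K T K f, h\<rangle> = \<langle>K f, h\<rangle>,
  and its analysis operator satisfies \<parallel>T_TF f\<parallel> = \<parallel>T K f\<parallel>.
  If G is any dual, test the duality against h = T* u with u = T K f, so that K* h = u: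
  the Cauchy--Schwarz inequality in L^2 gives
  \<parallel>u\<parallel>^2 = \<langle>K f, h\<rangle> \<le> \<parallel>T_G f\<parallel> \<parallel>K* h\<parallel> = \<parallel>T_G f\<parallel> \<parallel>u\<parallel>, i.e. \<parallel>T_TF f\<parallel> \<le> \<parallel>T_G f\<parallel> for every f.\<close>

section \<open>Complex inner product spaces\<close>

subclass (in chilbert_space) banach ..

lemma cinner_add_right: "cinner x (y + z) = cinner x y + cinner x z"
  by (metis cinner_commute cinner_add_left complex_cnj_add)

lemma cinner_scaleC_right: "cinner x (scaleC a y) = cnj a * cinner x y"
  by (metis cinner_commute cinner_scaleC_left complex_cnj_mult)

lemma cinner_zero_left [simp]: "cinner 0 y = 0"
  using cinner_add_left[of 0 0 y] by simp

lemma cinner_zero_right [simp]: "cinner x 0 = 0"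
  using cinner_add_right[of x 0 0] by simp

lemma cinner_minus_left: "cinner (- x) y = - cinner x y"
  using cinner_add_left[of x "- x" y] by (simp add: add_eq_0_iff)

lemma cinner_minus_right: "cinner x (- y) = - cinner x y"
  using cinner_add_right[of x y "- y"] by (simp add: add_eq_0_iff)

lemma cinner_diff_left: "cinner (x - y) z = cinner x z - cinner y z"
  using cinner_add_left[of x "- y" z] by (simp add: cinner_minus_left)

lemma cinner_diff_right: "cinner x (y - z) = cinner x y - cinner x z"
  using cinner_add_right[of x y "- z"] by (simp add: cinner_minus_right)

lemma scaleC_zero_right [simp]: "scaleC a 0 = 0"
  using scaleC_add_right[of a 0 0] by simp

lemma scaleC_zero_left [simp]: "scaleC 0 x = 0"
  using scaleC_add_left[of 0 0 x] by simp

lemma scaleC_minus_left: "scaleC (- a) x = - scaleC a x"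
  using scaleC_add_left[of a "- a" x] by (simp add: add_eq_0_iff)

lemma scaleC_minus_right: "scaleC a (- x) = - scaleC a x"
  using scaleC_add_right[of a x "- x"] by (simp add: add_eq_0_iff)

lemma scaleC_diff_right: "scaleC a (x - y) = scaleC a x - scaleC a y"
  using scaleC_add_right[of a x "- y"] by (simp add: scaleC_minus_right)

lemma cinner_self: "cinner x x = complex_of_real ((norm x)\<^sup>2)"
  using norm_eq_sqrt_cinner[of x] cinner_self_nonneg[of x] by (simp add: complex_eq_iff)

lemma cinner_self_eq_zero: "cinner x x = 0 \<longleftrightarrow> x = 0"
  by (simp add: cinner_self)

lemma cinner_ext: "(\<And>z. cinner z x = cinner z y) \<Longrightarrow> x = y"
  by (metis cinner_diff_right cinner_self_eq_zero right_minus_eq)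

lemma power2_norm_add_scaleC:
  "complex_of_real ((norm (u + scaleC c v))\<^sup>2) =
     cinner u u + cnj c * cinner u v + c * cnj (cinner u v) + c * cnj c * cinner v v"
  unfolding cinner_self[symmetric]
  by (simp add: cinner_add_left cinner_add_right cinner_scaleC_left cinner_scaleC_right
      cinner_commute[of v u] algebra_simps)

lemma power2_norm_add_cinner:
  "(norm (x + y))\<^sup>2 = (norm x)\<^sup>2 + (norm y)\<^sup>2 + 2 * Re (cinner x y)"
  using arg_cong[OF power2_norm_add_scaleC[of x 1 y], of Re] scaleC_one[of y]
  by (simp add: cinner_self)

lemma power2_norm_diff_cinner:
  "(norm (x - y))\<^sup>2 = (norm x)\<^sup>2 + (norm y)\<^sup>2 - 2 * Re (cinner x y)"
  using power2_norm_add_cinner[of x "- y"] by (simp add: cinner_minus_right)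

lemma parallelogram_law:
  fixes x y :: "'a::complex_inner"
  shows "(norm (x + y))\<^sup>2 + (norm (x - y))\<^sup>2 = 2 * (norm x)\<^sup>2 + 2 * (norm y)\<^sup>2"
  using power2_norm_add_cinner[of x y] power2_norm_diff_cinner[of x y] by linarith

lemma power2_norm_diff_line_projection:
  assumes "v \<noteq> 0"
  shows "(norm (z - scaleC (cinner z v / complex_of_real ((norm v)\<^sup>2)) v))\<^sup>2
           = (norm z)\<^sup>2 - (cmod (cinner z v))\<^sup>2 / (norm v)\<^sup>2"
proof -
  define c where "c = cinner z v"
  define n where "n = (norm v)\<^sup>2"
  define t where "t = c / complex_of_real n"
  have n: "n \<noteq> 0" using assms by (simp add: n_def)
  have cc: "c * cnj c = complex_of_real ((cmod c)\<^sup>2)"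
    by (rule complex_norm_square[symmetric])
  have "complex_of_real ((norm (z - scaleC t v))\<^sup>2)
      = cinner z z - cnj t * c - t * cnj c + t * cnj t * complex_of_real n"
    using power2_norm_add_scaleC[of z "- t" v]
    by (simp add: scaleC_minus_left cinner_self c_def n_def)
  also have "\<dots> = complex_of_real ((norm z)\<^sup>2 - (cmod c)\<^sup>2 / n)"
    using n cc[symmetric] by (simp add: t_def cinner_self field_simps power2_eq_square)
  finally show ?thesis
    unfolding t_def c_def n_def by (simp only: of_real_eq_iff)
qed

lemma Cauchy_Schwarz_cinner: "cmod (cinner x y) \<le> norm x * norm y"
proof (cases "y = 0")
  case False
  then have "(cmod (cinner x y))\<^sup>2 / (norm y)\<^sup>2 \<le> (norm x)\<^sup>2"
    using power2_norm_diff_line_projection[of y x] by (metis diff_ge_0_iff_ge zero_le_power2)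
  then have "(cmod (cinner x y))\<^sup>2 \<le> (norm x * norm y)\<^sup>2"
    using False by (simp add: pos_divide_le_eq power_mult_distrib)
  then show ?thesis by (rule power2_le_imp_le) simp
qed simp

lemma complex_polarization:
  "a * cnj b = (1/4) * (complex_of_real ((cmod (a + b))\<^sup>2) - complex_of_real ((cmod (a - b))\<^sup>2)
     + \<i> * complex_of_real ((cmod (a + \<i> * b))\<^sup>2) - \<i> * complex_of_real ((cmod (a - \<i> * b))\<^sup>2))"
  unfolding complex_norm_square by (simp add: algebra_simps)

lemma cinner_polarization:
  "cinner u v = (1/4) * (complex_of_real ((norm (u + v))\<^sup>2) - complex_of_real ((norm (u - v))\<^sup>2)
     + \<i> * complex_of_real ((norm (u + scaleC \<i> v))\<^sup>2) - \<i> * complex_of_real ((norm (u - scaleC \<i> v))\<^sup>2))"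
proof -
  have add: "complex_of_real ((norm (u + v))\<^sup>2) = cinner u u + cinner u v + cnj (cinner u v) + cinner v v"
    using power2_norm_add_scaleC[of u 1 v] by (simp add: scaleC_one)
  have diff: "complex_of_real ((norm (u - v))\<^sup>2)
      = cinner u u - cinner u v - cnj (cinner u v) + cinner v v"
    using power2_norm_add_scaleC[of u "- 1" v] by (simp add: scaleC_minus_left scaleC_one)
  have diff_i: "complex_of_real ((norm (u - scaleC \<i> v))\<^sup>2)
      = cinner u u + \<i> * cinner u v - \<i> * cnj (cinner u v) + cinner v v"
    using power2_norm_add_scaleC[of u "- \<i>" v] by (simp add: scaleC_minus_left)
  show ?thesis
    unfolding add diff diff_i power2_norm_add_scaleC by (simp add: algebra_simps)
qed

section \<open>Orthogonal projection onto a closed subspace\<close>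

definition csubspace :: "'a::complex_inner set \<Rightarrow> bool" where
  "csubspace V \<longleftrightarrow> 0 \<in> V \<and> (\<forall>x\<in>V. \<forall>y\<in>V. x + y \<in> V) \<and> (\<forall>c. \<forall>x\<in>V. scaleC c x \<in> V)"

lemma csubspace_0: "csubspace V \<Longrightarrow> 0 \<in> V"
  by (simp add: csubspace_def)

lemma csubspace_add: "csubspace V \<Longrightarrow> x \<in> V \<Longrightarrow> y \<in> V \<Longrightarrow> x + y \<in> V"
  by (simp add: csubspace_def)

lemma csubspace_scaleC: "csubspace V \<Longrightarrow> x \<in> V \<Longrightarrow> scaleC c x \<in> V"
  by (simp add: csubspace_def)

lemma csubspace_diff: "csubspace V \<Longrightarrow> x \<in> V \<Longrightarrow> y \<in> V \<Longrightarrow> x - y \<in> V"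
  using csubspace_add[of V x "scaleC (- 1) y"] csubspace_scaleC[of V y "- 1"]
  by (simp add: scaleC_minus_left scaleC_one)

lemma csubspace_scaleR: "csubspace V \<Longrightarrow> x \<in> V \<Longrightarrow> r *\<^sub>R x \<in> V"
  by (simp add: csubspace_scaleC scaleR_scaleC)

lemma minimizing_sequence_Cauchy:
  fixes V :: "'a::complex_inner set"
  assumes V: "csubspace V" and vs: "\<And>n. vs n \<in> V"
    and lower: "\<And>v. v \<in> V \<Longrightarrow> D \<le> (norm (x - v))\<^sup>2"
    and close: "\<And>n. (norm (x - vs n))\<^sup>2 < D + 1 / real (Suc n)"
  shows "Cauchy vs"
proof -
  have bound: "(norm (vs m - vs n))\<^sup>2 \<le> 2 / real (Suc m) + 2 / real (Suc n)" for m n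
  proof -
    define mid where "mid = (1/2) *\<^sub>R (vs m + vs n)"
    have "(x - vs m) + (x - vs n) = 2 *\<^sub>R (x - mid)"
      by (simp add: mid_def algebra_simps scaleR_2)
    moreover have "D \<le> (norm (x - mid))\<^sup>2"
      using V vs by (intro lower) (simp add: mid_def csubspace_scaleR csubspace_add)
    ultimately have "(norm (vs n - vs m))\<^sup>2 + 4 * D
        \<le> 2 * (norm (x - vs m))\<^sup>2 + 2 * (norm (x - vs n))\<^sup>2"
      using parallelogram_law[of "x - vs m" "x - vs n"] by (simp add: power_mult_distrib)
    then show ?thesis
      using close[of m] close[of n] by (simp add: norm_minus_commute)
  qed
  show ?thesis
  proof (rule CauchyI)
    fix e :: real assume e: "e > 0"
    obtain N :: nat where N: "4 / e\<^sup>2 < real N" using reals_Archimedean2 by blast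
    have "4 / real (Suc N) < e\<^sup>2"
      using N e by (simp add: field_simps) (smt (verit) zero_less_power)
    show "\<exists>N. \<forall>m\<ge>N. \<forall>n\<ge>N. norm (vs m - vs n) < e"
    proof (intro exI allI impI)
      fix m n assume "N \<le> m" "N \<le> n"
      then have "2 / real (Suc m) \<le> 2 / real (Suc N)" "2 / real (Suc n) \<le> 2 / real (Suc N)"
        by (auto intro!: divide_left_mono)
      with \<open>4 / real (Suc N) < e\<^sup>2\<close> have "(norm (vs m - vs n))\<^sup>2 < e\<^sup>2"
        using bound[of m n] by linarith
      then show "norm (vs m - vs n) < e"
        using e by (simp add: power_less_imp_less_base)
    qed
  qed
qed

lemma closest_point_exists:
  fixes V :: "'a::chilbert_space set"
  assumes V: "csubspace V" "closed V"
  shows "\<exists>p\<in>V. \<forall>v\<in>V. norm (x - p) \<le> norm (x - v)"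
proof -
  define D where "D = Inf ((\<lambda>v. (norm (x - v))\<^sup>2) ` V)"
  have bdd: "bdd_below ((\<lambda>v. (norm (x - v))\<^sup>2) ` V)"
    by (rule bdd_belowI[of _ 0]) auto
  have lower: "D \<le> (norm (x - v))\<^sup>2" if "v \<in> V" for v
    unfolding D_def using bdd that by (auto intro: cInf_lower)
  have "\<exists>v\<in>V. (norm (x - v))\<^sup>2 < D + 1 / real (Suc n)" for n
    using cInf_lessD[of "(\<lambda>v. (norm (x - v))\<^sup>2) ` V" "D + 1 / real (Suc n)"] csubspace_0[OF V(1)]
    unfolding D_def by auto
  then obtain vs where vs: "\<And>n. vs n \<in> V" "\<And>n. (norm (x - vs n))\<^sup>2 < D + 1 / real (Suc n)"
    by metis
  have "Cauchy vs"
    using V(1) vs(1) lower vs(2) by (rule minimizing_sequence_Cauchy)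
  then obtain p where p: "vs \<longlonglongrightarrow> p"
    using Cauchy_convergent_iff convergent_def by blast
  have "p \<in> V"
    using closed_sequentially[OF V(2)] vs(1) p by blast
  moreover have "(norm (x - p))\<^sup>2 \<le> D"
  proof (rule LIMSEQ_le)
    show "(\<lambda>n. (norm (x - vs n))\<^sup>2) \<longlonglongrightarrow> (norm (x - p))\<^sup>2"
      by (intro tendsto_intros p)
    show "(\<lambda>n. D + 1 / real (Suc n)) \<longlonglongrightarrow> D"
      using tendsto_add[OF tendsto_const LIMSEQ_inverse_real_of_nat, of D]
      by (simp add: inverse_eq_divide)
  qed (use vs(2) less_imp_le in blast)
  then have "norm (x - p) \<le> norm (x - v)" if "v \<in> V" for v
    using lower[OF that] by (simp add: power2_le_imp_le)
  ultimately show ?thesis by blast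
qed

lemma closest_point_orthogonal:
  assumes V: "csubspace V" and p: "p \<in> V"
    and closest: "\<And>v. v \<in> V \<Longrightarrow> norm (x - p) \<le> norm (x - v)" and v: "v \<in> V"
  shows "cinner (x - p) v = 0"
proof (rule ccontr)
  assume nz: "cinner (x - p) v \<noteq> 0"
  then have "v \<noteq> 0" by auto
  define t where "t = cinner (x - p) v / complex_of_real ((norm v)\<^sup>2)"
  have "p + scaleC t v \<in> V"
    using V p v by (simp add: csubspace_add csubspace_scaleC)
  then have "norm (x - p) \<le> norm (x - p - scaleC t v)"
    using closest by (simp add: diff_diff_eq)
  then have "(norm (x - p))\<^sup>2 \<le> (norm (x - p))\<^sup>2 - (cmod (cinner (x - p) v))\<^sup>2 / (norm v)\<^sup>2"
    using power2_norm_diff_line_projection[OF \<open>v \<noteq> 0\<close>, of "x - p"]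
    by (metis t_def norm_ge_zero power_mono)
  moreover have "(cmod (cinner (x - p) v))\<^sup>2 / (norm v)\<^sup>2 > 0"
    using nz \<open>v \<noteq> 0\<close> by simp
  ultimately show False by linarith
qed

definition proj :: "'a::complex_inner set \<Rightarrow> 'a \<Rightarrow> 'a" where
  "proj V x = (THE p. p \<in> V \<and> (\<forall>v\<in>V. cinner (x - p) v = 0))"

lemma orthogonal_decomposition_unique:
  assumes V: "csubspace V" and p: "p \<in> V" "\<forall>v\<in>V. cinner (x - p) v = 0"
    and q: "q \<in> V" "\<forall>v\<in>V. cinner (x - q) v = 0"
  shows "p = q"
proof -
  have "q - p \<in> V" using V p q by (simp add: csubspace_diff)
  then have "cinner (x - p) (q - p) - cinner (x - q) (q - p) = 0" using p q by simp
  then have "cinner (q - p) (q - p) = 0" by (simp add: cinner_diff_left[symmetric])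
  then show ?thesis by (simp add: cinner_self_eq_zero)
qed

locale closed_csubspace =
  fixes V :: "'a::chilbert_space set"
  assumes csubspace: "csubspace V" and closed: "closed V"
begin

lemma proj_characterization: "proj V x \<in> V \<and> (\<forall>v\<in>V. cinner (x - proj V x) v = 0)"
proof -
  obtain p where "p \<in> V" "\<forall>v\<in>V. norm (x - p) \<le> norm (x - v)"
    using closest_point_exists[OF csubspace closed] by blast
  then have p: "p \<in> V \<and> (\<forall>v\<in>V. cinner (x - p) v = 0)"
    using closest_point_orthogonal[OF csubspace] by blast
  show ?thesis unfolding proj_def
    by (rule theI[of _ p]) (use p orthogonal_decomposition_unique[OF csubspace] in blast)+
qed

lemma proj_in: "proj V x \<in> V"
  using proj_characterization by blast

lemma proj_orthogonal: "v \<in> V \<Longrightarrow> cinner (x - proj V x) v = 0"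
  using proj_characterization by blast

lemma proj_orthogonal': "v \<in> V \<Longrightarrow> cinner v (x - proj V x) = 0"
  by (metis proj_orthogonal cinner_commute complex_cnj_zero)

lemma proj_eqI: "p \<in> V \<Longrightarrow> (\<And>v. v \<in> V \<Longrightarrow> cinner (x - p) v = 0) \<Longrightarrow> proj V x = p"
  using orthogonal_decomposition_unique[OF csubspace] proj_characterization by blast

lemma proj_fixes: "x \<in> V \<Longrightarrow> proj V x = x"
  by (rule proj_eqI) auto

lemma proj_add: "proj V (x + y) = proj V x + proj V y"
proof (rule proj_eqI)
  show "proj V x + proj V y \<in> V"
    by (simp add: csubspace_add[OF csubspace] proj_in)
  fix v assume "v \<in> V"
  have "x + y - (proj V x + proj V y) = (x - proj V x) + (y - proj V y)" by simp
  then show "cinner (x + y - (proj V x + proj V y)) v = 0"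
    using \<open>v \<in> V\<close> by (simp only: cinner_add_left proj_orthogonal) simp
qed

lemma proj_scaleC: "proj V (scaleC c x) = scaleC c (proj V x)"
proof (rule proj_eqI)
  show "scaleC c (proj V x) \<in> V"
    by (simp add: csubspace_scaleC[OF csubspace] proj_in)
  fix v assume "v \<in> V"
  then show "cinner (scaleC c x - scaleC c (proj V x)) v = 0"
    by (simp add: scaleC_diff_right[symmetric] cinner_scaleC_left proj_orthogonal)
qed

lemma proj_diff: "proj V (x - y) = proj V x - proj V y"
  using proj_add[of "x - y" y] by simp

lemma cinner_proj_commute: "cinner (proj V x) y = cinner x (proj V y)"
proof -
  have "cinner (proj V x) y = cinner (proj V x) (proj V y)"
    using proj_orthogonal'[OF proj_in, of x y] by (simp add: cinner_diff_right)
  also have "\<dots> = cinner x (proj V y)"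
    using proj_orthogonal[OF proj_in, of x y] by (simp add: cinner_diff_left)
  finally show ?thesis .
qed

lemma power2_norm_proj_decomposition:
  "(norm x)\<^sup>2 = (norm (proj V x))\<^sup>2 + (norm (x - proj V x))\<^sup>2"
  using power2_norm_add_cinner[of "proj V x" "x - proj V x"] by (simp add: proj_orthogonal' proj_in)

lemma norm_proj_le: "norm (proj V x) \<le> norm x"
  using power2_norm_proj_decomposition[of x] by (simp add: power2_le_imp_le)

lemma norm_diff_proj_le: "norm (x - proj V x) \<le> norm x"
  using power2_norm_proj_decomposition[of x] by (simp add: power2_le_imp_le)

end

section \<open>Riesz representation and adjoints\<close>

lemma bounded_clinear_linear: "bounded_clinear K \<Longrightarrow> linear K"
  by (simp add: bounded_clinear_def bounded_linear.linear)

lemma bounded_clinear_add: "bounded_clinear K \<Longrightarrow> K (x + y) = K x + K y"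
  by (simp add: bounded_clinear_linear linear_add)

lemma bounded_clinear_diff: "bounded_clinear K \<Longrightarrow> K (x - y) = K x - K y"
  by (simp add: bounded_clinear_linear linear_diff)

lemma bounded_clinear_zero: "bounded_clinear K \<Longrightarrow> K 0 = 0"
  by (simp add: bounded_clinear_linear linear_0)

lemma bounded_clinear_scaleC: "bounded_clinear K \<Longrightarrow> K (scaleC c x) = scaleC c (K x)"
  by (simp add: bounded_clinear_def)

lemma csubspace_kernel: "bounded_clinear K \<Longrightarrow> csubspace {x. K x = 0}"
  by (simp add: csubspace_def bounded_clinear_zero bounded_clinear_add bounded_clinear_scaleC)

lemma closed_kernel: "bounded_clinear K \<Longrightarrow> closed {x. K x = 0}"
  by (rule closed_Collect_eq) (auto simp: bounded_clinear_def intro: linear_continuous_on)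

lemma csubspace_range:
  assumes K: "bounded_clinear K"
  shows "csubspace (range K)"
  unfolding csubspace_def
proof (intro conjI ballI allI)
  show "0 \<in> range K"
    using bounded_clinear_zero[OF K] by (metis rangeI)
  show "x + y \<in> range K" if "x \<in> range K" "y \<in> range K" for x y
    using that by (auto simp: bounded_clinear_add[OF K, symmetric])
  show "scaleC c x \<in> range K" if "x \<in> range K" for c x
    using that by (auto simp: bounded_clinear_scaleC[OF K, symmetric])
qed

lemma riesz_representation:
  fixes \<phi> :: "'a::chilbert_space \<Rightarrow> complex"
  assumes lin: "bounded_linear \<phi>" and hom: "\<And>c x. \<phi> (scaleC c x) = c * \<phi> x"
  shows "\<exists>z. \<forall>x. \<phi> x = cinner x z"
proof (cases "\<forall>x. \<phi> x = 0")
  case True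
  then show ?thesis by (intro exI[of _ 0]) simp
next
  case False
  then obtain x0 where x0: "\<phi> x0 \<noteq> 0" by blast
  define N where "N = {x. \<phi> x = 0}"
  have add: "\<phi> (x + y) = \<phi> x + \<phi> y" and diff: "\<phi> (x - y) = \<phi> x - \<phi> y" for x y
    using lin by (simp_all add: linear_add linear_diff bounded_linear.linear)
  have "csubspace N"
    unfolding csubspace_def N_def using hom[of 0 0] by (simp add: add hom)
  moreover have "closed N"
    unfolding N_def by (rule closed_Collect_eq) (auto intro: linear_continuous_on lin)
  ultimately interpret closed_csubspace N by unfold_locales
  define u where "u = x0 - proj N x0"
  have "\<phi> u = \<phi> x0"
    using proj_in[of x0] by (simp add: u_def diff N_def)
  then have u: "cinner u u \<noteq> 0"
    using x0 by (auto simp: cinner_self_eq_zero lin bounded_linear.linear linear_0)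
  show ?thesis
  proof (intro exI allI)
    fix x
    \<comment> \<open>the vector below lies in the kernel, hence is orthogonal to u\<close>
    have "cinner (scaleC (\<phi> x) u - scaleC (\<phi> u) x) u = 0"
      using proj_orthogonal'[of "scaleC (\<phi> x) u - scaleC (\<phi> u) x" x0]
      by (simp add: N_def diff hom u_def cinner_commute[of _ "x0 - proj N x0"] mult.commute)
    then have "\<phi> x * cinner u u = \<phi> u * cinner x u"
      by (simp add: cinner_diff_left cinner_scaleC_left)
    then show "\<phi> x = cinner x (scaleC (cnj (\<phi> u / cinner u u)) u)"
      using u by (simp add: cinner_scaleC_right field_simps)
  qed
qed

lemma is_adjoint_adj:
  fixes K :: "'a::chilbert_space \<Rightarrow> 'b::complex_inner"
  assumes K: "bounded_clinear K"
  shows "is_adjoint K (adj K)"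
proof -
  obtain C where C: "\<And>x. norm (K x) \<le> norm x * C"
    using K bounded_linear.bounded unfolding bounded_clinear_def by blast
  have "\<exists>z. \<forall>x. cinner (K x) y = cinner x z" for y
  proof (rule riesz_representation)
    show "bounded_linear (\<lambda>x. cinner (K x) y)"
    proof (rule bounded_linear_intro[where K = "C * norm y"])
      show "cinner (K (x + x')) y = cinner (K x) y + cinner (K x') y" for x x'
        by (simp add: bounded_clinear_add[OF K] cinner_add_left)
      show "cinner (K (r *\<^sub>R x)) y = r *\<^sub>R cinner (K x) y" for r x
        by (simp add: scaleR_scaleC bounded_clinear_scaleC[OF K] cinner_scaleC_left scaleR_conv_of_real)
      show "norm (cinner (K x) y) \<le> norm x * (C * norm y)" for x
        using Cauchy_Schwarz_cinner[of "K x" y] mult_right_mono[OF C[of x], of "norm y"]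
        by (simp add: mult.assoc)
    qed
    show "cinner (K (scaleC c x)) y = c * cinner (K x) y" for c x
      by (simp add: bounded_clinear_scaleC[OF K] cinner_scaleC_left)
  qed
  then have "\<exists>S. is_adjoint K S"
    unfolding is_adjoint_def by metis
  then show ?thesis
    unfolding adj_def by (rule someI_ex)
qed

lemma is_adjoint_cinner_right: "is_adjoint T S \<Longrightarrow> cinner x (T y) = cinner (S x) y"
  unfolding is_adjoint_def by (metis cinner_commute)

lemma is_adjoint_add:
  assumes "is_adjoint T S"
  shows "S (x + y) = S x + S y"
proof (rule cinner_ext)
  fix z
  have "cinner z (S w) = cinner (T z) w" for w
    using assms by (simp add: is_adjoint_def)
  then show "cinner z (S (x + y)) = cinner z (S x + S y)"
    by (simp add: cinner_add_right)
qed

lemma is_adjoint_scaleC: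
  assumes "is_adjoint T S"
  shows "S (scaleC c x) = scaleC c (S x)"
proof (rule cinner_ext)
  fix z
  have "cinner z (S w) = cinner (T z) w" for w
    using assms by (simp add: is_adjoint_def)
  then show "cinner z (S (scaleC c x)) = cinner z (scaleC c (S x))"
    by (simp add: cinner_scaleC_right)
qed

lemma is_adjoint_unique:
  assumes "is_adjoint T S1" and "is_adjoint T S2"
  shows "S1 = S2"
proof (intro ext cinner_ext)
  fix y z
  have "cinner z (S1 y) = cinner (T z) y" "cinner z (S2 y) = cinner (T z) y"
    using assms by (simp_all add: is_adjoint_def)
  then show "cinner z (S1 y) = cinner z (S2 y)" by simp
qed

lemma is_adjoint_comp: "is_adjoint K Ks \<Longrightarrow> is_adjoint T L \<Longrightarrow> is_adjoint (T \<circ> K) (Ks \<circ> L)"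
  by (simp add: is_adjoint_def)

lemma norm_selfadjoint_idempotent_le:
  assumes "is_adjoint P P" and "\<And>x. P (P x) = P x"
  shows "norm (P x) \<le> norm x"
proof -
  have "cinner x (P x) = cinner (P x) (P x)"
    using assms by (simp add: is_adjoint_def)
  then have "(norm (P x))\<^sup>2 = cmod (cinner x (P x))"
    by (simp add: cinner_self norm_power)
  also have "\<dots> \<le> norm x * norm (P x)"
    by (rule Cauchy_Schwarz_cinner)
  finally show ?thesis
    by (cases "P x = 0") (auto simp: power2_eq_square mult_le_cancel_right)
qed

section \<open>Bounded preimages for operators with closed range\<close>

lemma closed_range_image_ball_dense_somewhere:
  fixes K :: "'a::real_normed_vector \<Rightarrow> 'b::banach"
  assumes K: "bounded_linear K" and R: "closed (range K)"
  shows "\<exists>n::nat. \<exists>y0 r. r > 0 \<and> y0 \<in> range K \<and>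
           (\<forall>y\<in>range K. dist y y0 < r \<longrightarrow> y \<in> closure (K ` ball 0 (real n)))"
proof -
  define X where "X = top_of_set (range K)"
  define G where "G n = closure (K ` ball 0 (real n))" for n :: nat
  have G_range: "G n \<subseteq> range K" for n
    unfolding G_def using R by (intro closure_minimal) auto
  have "\<exists>n. X interior_of G n \<noteq> {}"
  proof (rule ccontr)
    assume "\<not> (\<exists>n. X interior_of G n \<noteq> {})"
    then have "X interior_of \<Union>(range G) = {}"
      \<comment> \<open>Baire: range K is complete, being closed\<close>
      using closed_subset[OF G_range] unfolding X_def G_def
      by (intro Baire_category_alt disjI1 completely_metrizable_space_closedin
          completely_metrizable_space_euclidean) (auto simp: R)
    moreover have "range K \<subseteq> \<Union>(range G)"
    proof
      fix y assume "y \<in> range K"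
      then obtain x where x: "y = K x" by blast
      obtain n :: nat where "norm x < real n" using reals_Archimedean2 by blast
      then have "y \<in> G n" unfolding G_def using x by (auto intro!: closure_subset[THEN subsetD])
      then show "y \<in> \<Union>(range G)" by blast
    qed
    then have "X interior_of (range K) \<subseteq> X interior_of \<Union>(range G)"
      by (rule interior_of_mono)
    moreover have "X interior_of (range K) = range K"
      using interior_of_topspace[of X] by (simp add: X_def)
    ultimately show False by auto
  qed
  then obtain n y0 where y0: "y0 \<in> X interior_of G n" by blast
  have op: "openin (top_of_set (range K)) (X interior_of G n)"
    using openin_interior_of X_def by blast
  then have "y0 \<in> range K"
    using y0 openin_subset[OF op] by auto
  moreover obtain r where "r > 0" "\<forall>y\<in>range K. dist y y0 < r \<longrightarrow> y \<in> X interior_of G n"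
    using op y0 unfolding openin_euclidean_subtopology_iff by blast
  ultimately show ?thesis
    using interior_of_subset[of X "G n"] unfolding G_def by blast
qed

lemma closed_range_approximate_preimage:
  fixes K :: "'a::real_normed_vector \<Rightarrow> 'b::banach"
  assumes K: "bounded_linear K" and R: "closed (range K)"
  shows "\<exists>M>0. \<forall>y\<in>range K. \<exists>x. norm x \<le> M * norm y \<and> norm (y - K x) \<le> norm y / 2"
proof -
  have lin: "linear K" using K by (rule bounded_linear.linear)
  obtain n :: nat and y0 r where r: "r > 0" and y0: "y0 \<in> range K"
    and dense: "\<And>y. y \<in> range K \<Longrightarrow> dist y y0 < r \<Longrightarrow> y \<in> closure (K ` ball 0 (real n))"
    using closed_range_image_ball_dense_somewhere[OF K R] by blast
  have near: "\<exists>x. norm x < real n \<and> dist (K x) y < e"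
    if "y \<in> range K" "dist y y0 < r" "e > 0" for y e
    using dense[OF that(1,2)] that(3) unfolding closure_approachable by fastforce
  \<comment> \<open>the ball of radius r around 0 is approximated by differences of two images of the n-ball\<close>
  have small: "\<exists>x. norm x < 2 * real n \<and> norm (K x - y) < e"
    if y: "y \<in> range K" "norm y < r" and e: "e > 0" for y e
  proof -
    have "y0 + y \<in> range K"
      using y y0 by (auto simp: linear_add[OF lin, symmetric])
    moreover have "dist (y0 + y) y0 < r" using y by (simp add: dist_norm)
    ultimately obtain x1 where x1: "norm x1 < real n" "dist (K x1) (y0 + y) < e / 2"
      using near e by (meson half_gt_zero)
    obtain x2 where x2: "norm x2 < real n" "dist (K x2) y0 < e / 2"
      using near[OF y0 _ half_gt_zero[OF e]] r by auto
    have "norm (x1 - x2) < 2 * real n"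
      using x1 x2 norm_triangle_ineq4[of x1 x2] by linarith
    moreover have "K (x1 - x2) - y = (K x1 - (y0 + y)) - (K x2 - y0)"
      by (simp add: linear_diff[OF lin])
    then have "norm (K (x1 - x2) - y) \<le> norm (K x1 - (y0 + y)) + norm (K x2 - y0)"
      by (metis norm_triangle_ineq4)
    then have "norm (K (x1 - x2) - y) < e"
      using x1(2) x2(2) by (simp add: dist_norm)
    ultimately show ?thesis by blast
  qed
  define M where "M = 4 * (real n + 1) / r"
  have "M > 0" using r by (simp add: M_def)
  moreover have "\<exists>x. norm x \<le> M * norm y \<and> norm (y - K x) \<le> norm y / 2" if y: "y \<in> range K" for y
  proof (cases "y = 0")
    case True
    then show ?thesis by (intro exI[of _ 0]) (simp add: linear_0[OF lin])
  next
    case False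
    define l where "l = r / (2 * norm y)"
    have l: "l > 0" using False r by (simp add: l_def)
    have "l *\<^sub>R y \<in> range K" using y by (auto simp: linear_scale[OF lin, symmetric])
    moreover have "norm (l *\<^sub>R y) < r" using l r False by (simp add: l_def)
    moreover have "norm y / 2 * l > 0" using False l by simp
    ultimately obtain x' where x': "norm x' < 2 * real n" "norm (K x' - l *\<^sub>R y) < norm y / 2 * l"
      using small by blast
    define x where "x = (1 / l) *\<^sub>R x'"
    have "norm x = norm x' / l" using l by (simp add: x_def)
    also have "\<dots> \<le> 2 * real n / l" using x' l by (simp add: divide_right_mono)
    also have "\<dots> = 4 * real n / r * norm y" using False r by (simp add: l_def field_simps)
    also have "\<dots> \<le> M * norm y" unfolding M_def using r
      by (intro mult_right_mono divide_right_mono) auto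
    finally have "norm x \<le> M * norm y" .
    moreover have "y - K x = (1 / l) *\<^sub>R (l *\<^sub>R y - K x')"
      using l by (simp add: x_def linear_scale[OF lin] scaleR_diff_right)
    then have "norm (y - K x) = norm (K x' - l *\<^sub>R y) / l"
      using l by (simp add: norm_minus_commute)
    moreover have "norm (K x' - l *\<^sub>R y) / l < norm y / 2"
      using x'(2) l by (simp add: pos_divide_less_eq)
    ultimately show ?thesis by (intro exI[of _ x]) simp
  qed
  ultimately show ?thesis by blast
qed

lemma preimage_of_approximate_preimage:
  fixes K :: "'a::banach \<Rightarrow> 'b::real_normed_vector"
  assumes K: "bounded_linear K" and M: "M \<ge> 0"
    and approx: "\<And>y. y \<in> range K \<Longrightarrow> \<exists>x. norm x \<le> M * norm y \<and> norm (y - K x) \<le> norm y / 2"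
    and y: "y \<in> range K"
  shows "\<exists>x. K x = y \<and> norm x \<le> 2 * M * norm y"
proof -
  have lin: "linear K" using K by (rule bounded_linear.linear)
  obtain g where g: "\<And>z. z \<in> range K \<Longrightarrow> norm (g z) \<le> M * norm z \<and> norm (z - K (g z)) \<le> norm z / 2"
    using approx by metis
  \<comment> \<open>zs k is the residual y - K (xs 0 + ... + xs (k - 1)) of the iteration\<close>
  define zs where "zs = rec_nat y (\<lambda>_ z. z - K (g z))"
  have zs_0: "zs 0 = y" and zs_Suc: "zs (Suc k) = zs k - K (g (zs k))" for k
    by (simp_all add: zs_def)
  have zs_range: "zs k \<in> range K" for k
  proof (induction k)
    case (Suc k)
    then obtain a where "zs k = K a" by blast
    then have "zs (Suc k) = K (a - g (zs k))" by (simp add: zs_Suc linear_diff[OF lin])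
    then show ?case by blast
  qed (simp add: zs_0 y)
  have norm_zs: "norm (zs k) \<le> norm y * (1/2) ^ k" for k
  proof (induction k)
    case (Suc k)
    then show ?case
      using g[OF zs_range[of k]] by (simp add: zs_Suc)
  qed (simp add: zs_0)
  define xs where "xs k = g (zs k)" for k
  have norm_xs: "norm (xs k) \<le> M * norm y * (1/2) ^ k" for k
    using g[OF zs_range[of k]] mult_left_mono[OF norm_zs[of k] M] by (simp add: xs_def mult.assoc)
  have geometric: "summable (\<lambda>k. M * norm y * (1/2::real) ^ k)"
    by (intro summable_mult summable_geometric) simp
  have summable_norm_xs: "summable (\<lambda>k. norm (xs k))"
    by (rule summable_comparison_test[OF _ geometric]) (use norm_xs in auto)
  define x where "x = suminf xs"
  have "norm x \<le> (\<Sum>k. norm (xs k))"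
    unfolding x_def by (rule summable_norm[OF summable_norm_xs])
  also have "\<dots> \<le> (\<Sum>k. M * norm y * (1/2::real) ^ k)"
    by (rule suminf_le[OF _ summable_norm_xs geometric]) (use norm_xs in auto)
  also have "\<dots> = 2 * M * norm y"
    using suminf_geometric[of "1/2::real"] by (simp add: suminf_mult)
  finally have "norm x \<le> 2 * M * norm y" .
  moreover have "K x = y"
  proof -
    have "xs sums x"
      using summable_norm_cancel[OF summable_norm_xs] by (simp add: x_def summable_sums)
    then have "(\<lambda>k. K (xs k)) sums K x" by (rule bounded_linear.sums[OF K])
    moreover have "(\<lambda>k. K (xs k)) sums y"
    proof -
      have partial: "(\<Sum>k<n. K (xs k)) = y - zs n" for n
        by (induction n) (simp_all add: zs_0 zs_Suc xs_def)
      have "zs \<longlonglongrightarrow> 0"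
      proof (rule Lim_null_comparison)
        show "\<forall>\<^sub>F n in sequentially. norm (zs n) \<le> norm y * (1/2) ^ n"
          using norm_zs by simp
        show "(\<lambda>n. norm y * (1/2::real) ^ n) \<longlonglongrightarrow> 0"
          by (intro tendsto_mult_right_zero LIMSEQ_power_zero) simp
      qed
      then have "(\<lambda>n. y - zs n) \<longlonglongrightarrow> y - 0" by (intro tendsto_intros)
      then show ?thesis by (simp add: sums_def partial)
    qed
    ultimately show ?thesis using sums_unique2 by blast
  qed
  ultimately show ?thesis by blast
qed

lemma closed_range_bounded_preimage:
  fixes K :: "'a::banach \<Rightarrow> 'b::banach"
  assumes K: "bounded_linear K" and R: "closed (range K)"
  shows "\<exists>C>0. \<forall>y\<in>range K. \<exists>x. K x = y \<and> norm x \<le> C * norm y"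
proof -
  obtain M where "M > 0"
    and "\<And>y. y \<in> range K \<Longrightarrow> \<exists>x. norm x \<le> M * norm y \<and> norm (y - K x) \<le> norm y / 2"
    using closed_range_approximate_preimage[OF K R] by blast
  then show ?thesis
    using preimage_of_approximate_preimage[OF K, of M] by (intro exI[of _ "2 * M"]) simp
qed

section \<open>The Moore--Penrose pseudo-inverse\<close>

definition is_pinv :: "('a::complex_inner \<Rightarrow> 'b::complex_inner) \<Rightarrow> ('b \<Rightarrow> 'a) \<Rightarrow> bool" where
  "is_pinv K S \<longleftrightarrow> bounded_clinear S \<and> K \<circ> S \<circ> K = K \<and> S \<circ> K \<circ> S = S
                  \<and> is_adjoint (K \<circ> S) (K \<circ> S) \<and> is_adjoint (S \<circ> K) (S \<circ> K)"

lemma is_pinvD: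
  assumes "is_pinv K S"
  shows "bounded_clinear S" and "K (S (K x)) = K x" and "S (K (S y)) = S y"
    and "is_adjoint (K \<circ> S) (K \<circ> S)" and "is_adjoint (S \<circ> K) (S \<circ> K)"
  using assms unfolding is_pinv_def by (auto simp: fun_eq_iff)

lemma is_pinv_unique:
  assumes S1: "is_pinv K S1" and S2: "is_pinv K S2"
  shows "S1 = S2"
proof
  have KS1: "cinner (K (S1 x)) y = cinner x (K (S1 y))" and S1K: "cinner (S1 (K u)) v = cinner u (S1 (K v))"
    and KS2: "cinner (K (S2 x)) y = cinner x (K (S2 y))" and S2K: "cinner (S2 (K u)) v = cinner u (S2 (K v))"
    for x y u v
    using is_pinvD(4,5)[OF S1] is_pinvD(4,5)[OF S2] by (simp_all add: is_adjoint_def)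
  have KS: "K (S1 y) = K (S2 y)" for y
  proof (rule cinner_ext)
    fix z
    have "cinner z (K (S1 y)) = cinner (K (S2 (K (S1 z)))) y"
      by (simp add: KS1 is_pinvD(2)[OF S2])
    also have "\<dots> = cinner z (K (S2 y))"
      by (simp add: KS1 KS2 is_pinvD(2)[OF S1])
    finally show "cinner z (K (S1 y)) = cinner z (K (S2 y))" .
  qed
  have SK: "S1 (K x) = S2 (K x)" for x
  proof (rule cinner_ext)
    fix z
    have "cinner z (S1 (K x)) = cinner (S1 (K (S2 (K z)))) x"
      by (simp add: S1K is_pinvD(2)[OF S2])
    also have "\<dots> = cinner z (S2 (K x))"
      by (simp add: S1K S2K is_pinvD(2)[OF S1])
    finally show "cinner z (S1 (K x)) = cinner z (S2 (K x))" .
  qed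
  fix y
  have "S1 y = S1 (K (S1 y))" by (simp add: is_pinvD(3)[OF S1])
  also have "\<dots> = S2 (K (S2 y))" by (simp add: SK KS)
  also have "\<dots> = S2 y" by (simp add: is_pinvD(3)[OF S2])
  finally show "S1 y = S2 y" .
qed

lemma ker_orth_proj:
  fixes K :: "'a::chilbert_space \<Rightarrow> 'b::complex_inner"
  assumes K: "bounded_clinear K"
  defines "Q \<equiv> \<lambda>x. x - proj {x. K x = 0} x"
  shows ker_orth_proj_eq: "K (Q x) = K x"
    and ker_orth_proj_fibre: "K a = K b \<Longrightarrow> Q a = Q b"
    and ker_orth_proj_add: "Q (a + b) = Q a + Q b"
    and ker_orth_proj_scaleC: "Q (scaleC c a) = scaleC c (Q a)"
    and cinner_ker_orth_proj_commute: "cinner (Q x) y = cinner x (Q y)"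
    and norm_ker_orth_proj_le: "norm (Q x) \<le> norm x"
proof -
  interpret N: closed_csubspace "{x. K x = 0}"
    using csubspace_kernel[OF K] closed_kernel[OF K] by unfold_locales
  show "K (Q x) = K x"
    using N.proj_in[of x] by (simp add: Q_def bounded_clinear_diff[OF K])
  show "Q a = Q b" if "K a = K b"
  proof -
    have "a - b \<in> {x. K x = 0}"
      using that by (simp add: bounded_clinear_diff[OF K])
    then show ?thesis
      using N.proj_fixes[of "a - b"] by (simp add: Q_def N.proj_diff algebra_simps)
  qed
  show "Q (a + b) = Q a + Q b"
    by (simp add: Q_def N.proj_add)
  show "Q (scaleC c a) = scaleC c (Q a)"
    by (simp add: Q_def N.proj_scaleC scaleC_diff_right)
  show "cinner (Q x) y = cinner x (Q y)"
    by (simp add: Q_def cinner_diff_left cinner_diff_right N.cinner_proj_commute)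
  show "norm (Q x) \<le> norm x"
    unfolding Q_def by (rule N.norm_diff_proj_le)
qed

lemma closed_range_ker_orth_proj_bound:
  fixes K :: "'a::chilbert_space \<Rightarrow> 'b::chilbert_space"
  assumes K: "bounded_clinear K" and R: "closed (range K)"
  shows "\<exists>C>0. \<forall>x. norm (x - proj {x. K x = 0} x) \<le> C * norm (K x)"
proof -
  obtain C where C: "C > 0" "\<And>y. y \<in> range K \<Longrightarrow> \<exists>x. K x = y \<and> norm x \<le> C * norm y"
    using closed_range_bounded_preimage[of K] K R unfolding bounded_clinear_def by blast
  have "norm (x - proj {x. K x = 0} x) \<le> C * norm (K x)" for x
  proof -
    obtain x' where x': "K x' = K x" "norm x' \<le> C * norm (K x)"
      using C(2)[of "K x"] by blast
    have "norm (x - proj {x. K x = 0} x) = norm (x' - proj {x. K x = 0} x')"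
      using ker_orth_proj_fibre[OF K x'(1)] by simp
    also have "\<dots> \<le> norm x'"
      by (rule norm_ker_orth_proj_le[OF K])
    finally show ?thesis using x'(2) by simp
  qed
  then show ?thesis using C(1) by blast
qed

lemma is_pinv_exists:
  fixes K :: "'a::chilbert_space \<Rightarrow> 'b::chilbert_space"
  assumes K: "bounded_clinear K" and R: "closed (range K)"
  shows "\<exists>S. is_pinv K S"
proof -
  interpret R: closed_csubspace "range K"
    using csubspace_range[OF K] R by unfold_locales
  define Q where "Q x = x - proj {x. K x = 0} x" for x
  obtain C where "C > 0" and C: "\<And>x. norm (Q x) \<le> C * norm (K x)"
    using closed_range_ker_orth_proj_bound[OF K R] unfolding Q_def by blast
  \<comment> \<open>S y is the preimage of the projection of y onto range K that is orthogonal to the kernel\<close>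
  define pre where "pre y = (SOME x. K x = proj (range K) y)" for y
  have K_pre: "K (pre y) = proj (range K) y" for y
    unfolding pre_def using R.proj_in[of y] by (metis (mono_tags, lifting) imageE someI)
  define S where "S y = Q (pre y)" for y
  have KS: "K (S y) = proj (range K) y" for y
    by (simp add: S_def Q_def ker_orth_proj_eq[OF K] K_pre)
  have SK: "S (K x) = Q x" for x
    unfolding S_def Q_def by (rule ker_orth_proj_fibre[OF K]) (simp add: K_pre R.proj_fixes)
  have S_add: "S (a + b) = S a + S b" for a b
    using ker_orth_proj_fibre[OF K, of "pre (a + b)" "pre a + pre b"]
    by (simp add: S_def Q_def K_pre R.proj_add bounded_clinear_add[OF K] ker_orth_proj_add[OF K])
  have S_scaleC: "S (scaleC c a) = scaleC c (S a)" for c a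
    using ker_orth_proj_fibre[OF K, of "pre (scaleC c a)" "scaleC c (pre a)"]
    by (simp add: S_def Q_def K_pre R.proj_scaleC bounded_clinear_scaleC[OF K] ker_orth_proj_scaleC[OF K])
  have "norm (S y) \<le> norm y * C" for y
  proof -
    have "norm (S y) \<le> C * norm (proj (range K) y)"
      unfolding S_def using C[of "pre y"] by (simp add: K_pre)
    also have "\<dots> \<le> C * norm y"
      using \<open>C > 0\<close> by (intro mult_left_mono R.norm_proj_le) simp
    finally show ?thesis by (simp add: mult.commute)
  qed
  then have "bounded_clinear S"
    unfolding bounded_clinear_def
    using S_add S_scaleC by (auto intro!: bounded_linear_intro simp: scaleR_scaleC)
  moreover have "K (S (K x)) = K x" for x
    by (simp add: SK Q_def ker_orth_proj_eq[OF K])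
  moreover have "S (K (S y)) = S y" for y
    unfolding SK unfolding S_def Q_def
    by (rule ker_orth_proj_fibre[OF K]) (simp add: ker_orth_proj_eq[OF K])
  moreover have "is_adjoint (K \<circ> S) (K \<circ> S)" "is_adjoint (S \<circ> K) (S \<circ> K)"
    by (simp_all add: is_adjoint_def KS SK Q_def R.cinner_proj_commute cinner_ker_orth_proj_commute[OF K])
  ultimately show ?thesis
    unfolding is_pinv_def by (auto simp: fun_eq_iff)
qed

lemma is_pinv_pinv:
  fixes K :: "'a::chilbert_space \<Rightarrow> 'b::chilbert_space"
  assumes "bounded_clinear K" and "closed (range K)"
  shows "is_pinv K (pinv K)"
proof -
  obtain S where S: "is_pinv K S"
    using is_pinv_exists[OF assms] by blast
  have "pinv K = S"
    unfolding pinv_def using S is_pinv_unique[OF _ S] unfolding is_pinv_def by (intro the_equality) blast+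
  then show ?thesis using S by simp
qed

section \<open>Continuous frames and the canonical dual\<close>

definition analysis_norm_at :: "'b measure \<Rightarrow> ('b \<Rightarrow> 'a::complex_inner) \<Rightarrow> 'a \<Rightarrow> real" where
  "analysis_norm_at M G f = sqrt (enn2real (\<integral>\<^sup>+\<omega>. ennreal ((cmod (cinner f (G \<omega>)))\<^sup>2) \<partial>M))"

lemma analysis_norm_eq_SUP: "analysis_norm M G = (SUP f\<in>{f. norm f \<le> 1}. analysis_norm_at M G f)"
  by (simp add: analysis_norm_def analysis_norm_at_def)

lemma analysis_norm_mono:
  assumes "cont_bessel M G" and "\<And>f. norm f \<le> 1 \<Longrightarrow> analysis_norm_at M F f \<le> analysis_norm_at M G f"
  shows "analysis_norm M F \<le> analysis_norm M G"
proof -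
  obtain B where "B > 0"
    and B: "\<And>f. (\<integral>\<^sup>+\<omega>. ennreal ((cmod (cinner f (G \<omega>)))\<^sup>2) \<partial>M) \<le> ennreal (B * (norm f)\<^sup>2)"
    using assms(1) by (auto simp: cont_bessel_def)
  have "analysis_norm_at M G f \<le> sqrt B" if "norm f \<le> 1" for f
  proof -
    have "enn2real (\<integral>\<^sup>+\<omega>. ennreal ((cmod (cinner f (G \<omega>)))\<^sup>2) \<partial>M) \<le> B * (norm f)\<^sup>2"
      using enn2real_mono[OF B[of f]] \<open>B > 0\<close> by simp
    also have "\<dots> \<le> B"
      using that \<open>B > 0\<close> by (simp add: power_le_one mult_left_le)
    finally show ?thesis by (simp add: analysis_norm_at_def)
  qed
  then have "bdd_above (analysis_norm_at M G ` {f. norm f \<le> 1})"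
    by (intro bdd_aboveI2[where M = "sqrt B"]) simp
  then show ?thesis
    unfolding analysis_norm_eq_SUP
    by (intro cSUP_mono) (auto intro: assms(2) exI[of _ 0])
qed

lemma weakly_measurable_cinner_left:
  "weakly_measurable M F \<Longrightarrow> (\<lambda>\<omega>. cinner (F \<omega>) h) \<in> borel_measurable M"
  unfolding weakly_measurable_def
  by (subst cinner_commute) (auto intro: borel_measurable_continuous_on[where f = cnj] continuous_on_cnj)

lemma parseval_cont_K_frame_has_integral_inner:
  assumes P: "parseval_cont_K_frame M K F" and adj: "is_adjoint K (adj K)"
  shows "has_bochner_integral M (\<lambda>\<omega>. cinner x (F \<omega>) * cinner (F \<omega>) h) (cinner (adj K x) (adj K h))"
proof -
  define A where "A = adj K"
  have [measurable]: "(\<lambda>\<omega>. cinner u (F \<omega>)) \<in> borel_measurable M" for u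
    using P by (simp add: parseval_cont_K_frame_def weakly_measurable_def)
  define g where "g u \<omega> = complex_of_real ((cmod (cinner u (F \<omega>)))\<^sup>2)" for u \<omega>
  have g: "has_bochner_integral M (g u) (complex_of_real ((norm (A u))\<^sup>2))" for u
    unfolding g_def
    by (intro has_bochner_integral_bounded_linear[OF bounded_linear_of_real]
        has_bochner_integral_nn_integral) (use P in \<open>simp_all add: parseval_cont_K_frame_def A_def\<close>)
  have "has_bochner_integral M (\<lambda>\<omega>. (1/4) * (g (x + h) \<omega> - g (x - h) \<omega>
          + \<i> * g (x + scaleC \<i> h) \<omega> - \<i> * g (x - scaleC \<i> h) \<omega>))
        ((1/4) * (complex_of_real ((norm (A (x + h)))\<^sup>2) - complex_of_real ((norm (A (x - h)))\<^sup>2)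
          + \<i> * complex_of_real ((norm (A (x + scaleC \<i> h)))\<^sup>2)
          - \<i> * complex_of_real ((norm (A (x - scaleC \<i> h)))\<^sup>2)))"
    by (intro has_bochner_integral_mult_right has_bochner_integral_diff has_bochner_integral_add g)
  moreover have "(1/4) * (g (x + h) \<omega> - g (x - h) \<omega> + \<i> * g (x + scaleC \<i> h) \<omega>
      - \<i> * g (x - scaleC \<i> h) \<omega>) = cinner x (F \<omega>) * cinner (F \<omega>) h" for \<omega>
    using complex_polarization[of "cinner x (F \<omega>)" "cinner h (F \<omega>)"]
    by (simp add: g_def cinner_add_left cinner_diff_left cinner_scaleC_left cinner_commute[of "F \<omega>" h])
  moreover have "A (u - v) = A u - A v" for u v
    using is_adjoint_add[OF adj, of "u - v" v] by (simp add: A_def)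
  then have "(1/4) * (complex_of_real ((norm (A (x + h)))\<^sup>2) - complex_of_real ((norm (A (x - h)))\<^sup>2)
          + \<i> * complex_of_real ((norm (A (x + scaleC \<i> h)))\<^sup>2)
          - \<i> * complex_of_real ((norm (A (x - scaleC \<i> h)))\<^sup>2)) = cinner (A x) (A h)"
    using is_adjoint_add[OF adj] is_adjoint_scaleC[OF adj]
    by (simp add: A_def cinner_polarization[of "adj K x"])
  ultimately show ?thesis
    by (simp add: A_def)
qed

lemma adj_pinv_comp_adj:
  fixes K :: "'a::chilbert_space \<Rightarrow> 'b::chilbert_space"
  assumes K: "bounded_clinear K" and R: "closed (range K)"
  shows "adj K (adj (pinv K) f) = pinv K (K f)"
proof -
  have "is_adjoint (pinv K \<circ> K) (adj K \<circ> adj (pinv K))"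
    by (intro is_adjoint_comp is_adjoint_adj K is_pinvD(1)[OF is_pinv_pinv[OF K R]])
  then have "adj K \<circ> adj (pinv K) = pinv K \<circ> K"
    using is_adjoint_unique is_pinvD(5)[OF is_pinv_pinv[OF K R]] by blast
  then show ?thesis by (simp add: fun_eq_iff)
qed

lemma norm_pinv_comp_le:
  fixes K :: "'a::chilbert_space \<Rightarrow> 'b::chilbert_space"
  assumes K: "bounded_clinear K" and R: "closed (range K)"
  shows "norm (pinv K (K f)) \<le> norm f"
  using norm_selfadjoint_idempotent_le[of "pinv K \<circ> K"] is_pinvD(3,5)[OF is_pinv_pinv[OF K R]] by simp

lemma nn_integral_pinv_frame:
  fixes K :: "'a::chilbert_space \<Rightarrow> 'a"
  assumes K: "bounded_clinear K" and R: "closed (range K)" and P: "parseval_cont_K_frame M K F"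
  shows "(\<integral>\<^sup>+\<omega>. ennreal ((cmod (cinner f (pinv K (F \<omega>))))\<^sup>2) \<partial>M) = ennreal ((norm (pinv K (K f)))\<^sup>2)"
  using P is_adjoint_cinner_right[OF is_adjoint_adj[OF is_pinvD(1)[OF is_pinv_pinv[OF K R]]]]
  by (simp add: parseval_cont_K_frame_def adj_pinv_comp_adj[OF K R])

lemma dual_cont_K_bessel_pinv:
  fixes K :: "'a::chilbert_space \<Rightarrow> 'a"
  assumes K: "bounded_clinear K" and R: "closed (range K)" and P: "parseval_cont_K_frame M K F"
  shows "dual_cont_K_bessel M K F (\<lambda>\<omega>. pinv K (F \<omega>))"
proof -
  define L where "L = adj (pinv K)"
  have adjL: "cinner f (pinv K y) = cinner (L f) y" for f y
    unfolding L_def by (rule is_adjoint_cinner_right[OF is_adjoint_adj[OF is_pinvD(1)[OF is_pinv_pinv[OF K R]]]])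
  have "weakly_measurable M (\<lambda>\<omega>. pinv K (F \<omega>))"
    using P by (simp add: weakly_measurable_def parseval_cont_K_frame_def adjL)
  moreover have "(\<integral>\<^sup>+\<omega>. ennreal ((cmod (cinner f (pinv K (F \<omega>))))\<^sup>2) \<partial>M) \<le> ennreal (1 * (norm f)\<^sup>2)" for f
    unfolding nn_integral_pinv_frame[OF K R P]
    using norm_pinv_comp_le[OF K R, of f] by (intro ennreal_leI) (simp add: power_mono)
  moreover have "cinner (K f) h = (\<integral>\<omega>. cinner f (pinv K (F \<omega>)) * cinner (F \<omega>) h \<partial>M)" for f h
  proof -
    have "(\<integral>\<omega>. cinner f (pinv K (F \<omega>)) * cinner (F \<omega>) h \<partial>M) = cinner (adj K (L f)) (adj K h)"
      unfolding adjL
      by (rule has_bochner_integral_integral_eq[OF parseval_cont_K_frame_has_integral_inner[OF P is_adjoint_adj[OF K]]])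
    also have "\<dots> = cinner (K (pinv K (K f))) h"
      using is_adjoint_adj[OF K] by (simp add: is_adjoint_def L_def adj_pinv_comp_adj[OF K R])
    also have "\<dots> = cinner (K f) h"
      by (simp add: is_pinvD(2)[OF is_pinv_pinv[OF K R]])
    finally show ?thesis ..
  qed
  ultimately show ?thesis
    unfolding dual_cont_K_bessel_def cont_bessel_def by (blast intro: zero_less_one)
qed

lemma dual_cont_K_bessel_cinner_le:
  assumes G: "dual_cont_K_bessel M K F G" and P: "parseval_cont_K_frame M K F"
  shows "cmod (cinner (K f) h) \<le> analysis_norm_at M G f * norm (adj K h)"
proof -
  have "weakly_measurable M G"
    using G by (simp add: dual_cont_K_bessel_def cont_bessel_def)
  then have [measurable]: "(\<lambda>\<omega>. cinner f (G \<omega>)) \<in> borel_measurable M"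
    by (simp add: weakly_measurable_def)
  have [measurable]: "(\<lambda>\<omega>. cinner (F \<omega>) h) \<in> borel_measurable M"
    using P unfolding parseval_cont_K_frame_def by (blast intro: weakly_measurable_cinner_left)
  define X where "X = (\<integral>\<^sup>+\<omega>. ennreal ((cmod (cinner f (G \<omega>)))\<^sup>2) \<partial>M)"
  obtain B where "X \<le> ennreal (B * (norm f)\<^sup>2)"
    using G by (auto simp: dual_cont_K_bessel_def cont_bessel_def X_def)
  then have "X < top"
    by (rule order.strict_trans1[OF _ ennreal_less_top])
  then obtain x where x: "x \<ge> 0" "X = ennreal x"
    unfolding less_top_ennreal by blast
  have "ennreal (cmod (cinner (K f) h))
      \<le> (\<integral>\<^sup>+\<omega>. ennreal (cmod (cinner f (G \<omega>))) * ennreal (cmod (cinner (F \<omega>) h)) \<partial>M)"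
    (is "_ \<le> ?Z")
  proof (cases "integrable M (\<lambda>\<omega>. cinner f (G \<omega>) * cinner (F \<omega>) h)")
    case True
    then show ?thesis
      using integral_norm_bound_ennreal[OF True] G
      by (simp add: dual_cont_K_bessel_def norm_mult ennreal_mult)
  next
    case False
    then show ?thesis
      using G by (simp add: dual_cont_K_bessel_def not_integrable_integral_eq)
  qed
  then have "(ennreal (cmod (cinner (K f) h)))\<^sup>2 \<le> ?Z\<^sup>2"
    by (rule power_mono) simp
  also have "\<dots> \<le> (\<integral>\<^sup>+\<omega>. ennreal (cmod (cinner f (G \<omega>))) ^ 2 \<partial>M)
      * (\<integral>\<^sup>+\<omega>. ennreal (cmod (cinner (F \<omega>) h)) ^ 2 \<partial>M)"
    by (rule Cauchy_Schwarz_nn_integral[where f = "\<lambda>\<omega>. ennreal (cmod (cinner f (G \<omega>)))"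
          and g = "\<lambda>\<omega>. ennreal (cmod (cinner (F \<omega>) h))"]) simp_all
  also have "\<dots> = ennreal x * ennreal ((norm (adj K h))\<^sup>2)"
  proof -
    have "cmod (cinner (F \<omega>) h) = cmod (cinner h (F \<omega>))" for \<omega>
      by (metis cinner_commute complex_mod_cnj)
    then show ?thesis
      using P x by (simp add: X_def ennreal_power parseval_cont_K_frame_def)
  qed
  finally have "ennreal ((cmod (cinner (K f) h))\<^sup>2) \<le> ennreal (x * (norm (adj K h))\<^sup>2)"
    using x by (simp add: ennreal_power ennreal_mult)
  then have "(cmod (cinner (K f) h))\<^sup>2 \<le> (sqrt x * norm (adj K h))\<^sup>2"
    using x by (simp add: power_mult_distrib)
  then have "cmod (cinner (K f) h) \<le> sqrt x * norm (adj K h)"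
    by (rule power2_le_imp_le) (use x in simp)
  then show ?thesis
    using x by (simp add: analysis_norm_at_def X_def[symmetric])
qed

lemma analysis_norm_at_pinv_frame_le:
  fixes K :: "'a::chilbert_space \<Rightarrow> 'a"
  assumes K: "bounded_clinear K" and R: "closed (range K)" and P: "parseval_cont_K_frame M K F"
    and G: "dual_cont_K_bessel M K F G"
  shows "analysis_norm_at M (\<lambda>\<omega>. pinv K (F \<omega>)) f \<le> analysis_norm_at M G f"
proof -
  define u where "u = pinv K (K f)"
  \<comment> \<open>test the duality relation against the h with adj K h = u\<close>
  define h where "h = adj (pinv K) u"
  have "cinner (K f) h = cinner u u"
    unfolding h_def u_def
    using is_adjoint_adj[OF is_pinvD(1)[OF is_pinv_pinv[OF K R]]] by (simp add: is_adjoint_def)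
  moreover have "adj K h = u"
    by (simp add: h_def u_def adj_pinv_comp_adj[OF K R] is_pinvD(3)[OF is_pinv_pinv[OF K R]])
  ultimately have "(norm u)\<^sup>2 \<le> analysis_norm_at M G f * norm u"
    using dual_cont_K_bessel_cinner_le[OF G P, of f h] by (simp add: cinner_self norm_power)
  then have "norm u \<le> analysis_norm_at M G f"
    by (cases "u = 0") (auto simp: power2_eq_square mult_le_cancel_right analysis_norm_at_def)
  then show ?thesis
    by (simp add: analysis_norm_at_def nn_integral_pinv_frame[OF K R P] u_def)
qed

theorem theorem3p4:
  fixes M :: "'b measure" and K :: "'a::chilbert_space \<Rightarrow> 'a" and F :: "'b \<Rightarrow> 'a"
  assumes "separable_space TYPE('a)"
    and "bounded_clinear K"
    and "closed (range K)"
    and "parseval_cont_K_frame M K F"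
  shows "dual_cont_K_bessel M K F (\<lambda>\<omega>. pinv K (F \<omega>)) \<and>
         (\<forall>G. dual_cont_K_bessel M K F G \<longrightarrow>
              analysis_norm M (\<lambda>\<omega>. pinv K (F \<omega>)) \<le> analysis_norm M G)"
proof (intro conjI allI impI)
  show "dual_cont_K_bessel M K F (\<lambda>\<omega>. pinv K (F \<omega>))"
    using assms(2-4) by (rule dual_cont_K_bessel_pinv)
  fix G assume G: "dual_cont_K_bessel M K F G"
  then have "cont_bessel M G"
    by (simp add: dual_cont_K_bessel_def)
  then show "analysis_norm M (\<lambda>\<omega>. pinv K (F \<omega>)) \<le> analysis_norm M G"
    using analysis_norm_at_pinv_frame_le[OF assms(2-4) G] by (rule analysis_norm_mono)
qed

end
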